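(* Let $C,A_1,\dots,A_M$ be real symmetric $N\times N$ matrices and $b\in\mathbb{R}^M$ such that the SDP $\min\{\operatorname{Tr}(C^TX):\operatorname{Tr}(A_i^TX)=b_i\ (i=1,\dots,M),\ X\succeq0\}$ has a feasible $X\succ0$ and finite optimal value. For $t>0$ let $X_t$ be the minimizer of $\operatorname{Tr}(C^TX)-\frac1t\log\det X$ subject to $\operatorname{Tr}(A_i^TX)=b_i$, $X\succ0$. Given $t_{k-1}>0$, the function $$g_{k-1}(t)=\operatorname{Tr}(C^TX_{t_{k-1}})-\frac{N}{t_{k-1}}+\frac Nt$$ satisfies $g_{k-1}(t)\le\operatorname{Tr}(C^TX_t)$ for every $t\ge t_{k-1}$. *)

theory Defs
  imports "HOL-Analysis.Analysis"
begin

definition symmetric_mat :: "real^'n^'n \<Rightarrow> bool" where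
  "symmetric_mat X \<longleftrightarrow> transpose X = X"

definition psd :: "real^'n^'n \<Rightarrow> bool" where
  "psd X \<longleftrightarrow> symmetric_mat X \<and> (\<forall>x. 0 \<le> x \<bullet> (X *v x))"

definition pd :: "real^'n^'n \<Rightarrow> bool" where
  "pd X \<longleftrightarrow> symmetric_mat X \<and> (\<forall>x. x \<noteq> 0 \<longrightarrow> 0 < x \<bullet> (X *v x))"

text \<open>Feasible set of the SDP: Tr(A_i^T X) = b_i for i = 1..M (indexed 0..M-1), X \<succeq> 0.\<close>
definition sdp_feasible ::
  "nat \<Rightarrow> (nat \<Rightarrow> real^'n^'n) \<Rightarrow> (nat \<Rightarrow> real) \<Rightarrow> (real^'n^'n) set" where
  "sdp_feasible M A b = {X. (\<forall>i<M. trace (transpose (A i) ** X) = b i) \<and> psd X}"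

definition barrier_obj :: "real^'n^'n \<Rightarrow> real \<Rightarrow> real^'n^'n \<Rightarrow> real" where
  "barrier_obj C t X = trace (transpose C ** X) - (1 / t) * ln (det X)"

definition barrier_minimizer ::
  "real^'n^'n \<Rightarrow> nat \<Rightarrow> (nat \<Rightarrow> real^'n^'n) \<Rightarrow> (nat \<Rightarrow> real) \<Rightarrow> real \<Rightarrow> real^'n^'n \<Rightarrow> bool" where
  "barrier_minimizer C M A b t X \<longleftrightarrow>
     (\<forall>i<M. trace (transpose (A i) ** X) = b i) \<and> pd X \<and>
     (\<forall>Y. (\<forall>i<M. trace (transpose (A i) ** Y) = b i) \<and> pd Y \<longrightarrow>
          barrier_obj C t X \<le> barrier_obj C t Y)"

end

theory Submission
  imports Defs
begin

text \<open>Write \<Delta> for the increase of the objective Tr(C^T X) from X_prev = X_{t_prev} to X_t and N for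
  the dimension. Since the derivative of log det at X in direction D is Tr(D X^{-1}), the first-order
  optimality of the barrier minimizer X_s, tested against a strictly feasible Y, gives
  Tr(Y X_s^{-1}) - N \<le> s (Tr(C^T Y) - Tr(C^T X_s)). Used at s = t_prev with Y = X_t and at s = t with
  Y = X_prev, this bounds Tr(X_t X_prev^{-1}) by N + t_prev \<Delta> and Tr(X_prev X_t^{-1}) by N - t \<Delta>.
  The matrix Cauchy-Schwarz inequality Tr(P Q^{-1}) Tr(Q P^{-1}) \<ge> N^2 for positive definite P, Q
  then gives N^2 \<le> (N + t_prev \<Delta>)(N - t \<Delta>), which for t \<ge> t_prev forces \<Delta> \<ge> N/t - N/t_prev.
  The Cauchy-Schwarz inequality reduces, by a congruence E P E^T = I, to Tr H Tr H^{-1} \<ge> N^2, which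
  follows from H_ii (H^{-1})_ii \<ge> 1.

  Symmetry of the data, strict feasibility and boundedness of the SDP only serve to guarantee that the
  barrier minimizers exist.\<close>

lemma
  fixes A :: "'a::semiring_1^'n^'m"
  assumes "invertible A"
  shows matrix_inv_right: "A ** matrix_inv A = mat 1"
    and matrix_inv_left: "matrix_inv A ** A = mat 1"
  using someI_ex[OF assms[unfolded invertible_def]] by (auto simp: matrix_inv_def)

lemma matrix_inv_unique:
  fixes A B :: "'a::field^'n^'n"
  assumes "A ** B = mat 1"
  shows "matrix_inv A = B"
proof -
  have "invertible A" using assms invertible_right_inverse by blast
  then show ?thesis by (metis assms matrix_inv_left matrix_mul_assoc matrix_mul_lid matrix_mul_rid)
qed

lemma transpose_mult_transpose_matrix_inv:
  fixes E :: "'a::comm_semiring_1^'n^'n"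
  assumes "invertible E"
  shows "transpose E ** transpose (matrix_inv E) = mat 1"
  by (metis assms matrix_inv_left matrix_transpose_mul transpose_mat)

lemma matrix_inv_congruence:
  fixes E Q :: "'a::field^'n^'n"
  assumes "invertible E" "invertible Q"
  shows "matrix_inv (E ** Q ** transpose E) = transpose (matrix_inv E) ** matrix_inv Q ** matrix_inv E"
proof (rule matrix_inv_unique)
  have "E ** Q ** transpose E ** (transpose (matrix_inv E) ** matrix_inv Q ** matrix_inv E) =
      E ** (Q ** (transpose E ** transpose (matrix_inv E)) ** matrix_inv Q) ** matrix_inv E"
    by (simp add: matrix_mul_assoc)
  also have "\<dots> = mat 1"
    using assms by (simp add: transpose_mult_transpose_matrix_inv matrix_inv_right)
  finally show "E ** Q ** transpose E ** (transpose (matrix_inv E) ** matrix_inv Q ** matrix_inv E) = mat 1" .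
qed

lemma trace_congruence_mult_inv:
  fixes E P Q :: "'a::field^'n^'n"
  assumes "invertible E" "invertible Q"
  shows "trace (E ** P ** transpose E ** matrix_inv (E ** Q ** transpose E)) = trace (P ** matrix_inv Q)"
proof -
  have "E ** P ** transpose E ** matrix_inv (E ** Q ** transpose E) =
      E ** (P ** (transpose E ** transpose (matrix_inv E)) ** matrix_inv Q) ** matrix_inv E"
    unfolding matrix_inv_congruence[OF assms] by (simp add: matrix_mul_assoc)
  also have "\<dots> = E ** (P ** matrix_inv Q) ** matrix_inv E"
    using assms(1) by (simp add: transpose_mult_transpose_matrix_inv)
  finally show ?thesis
    using assms(1) by (simp add: trace_mul_sym[of _ "matrix_inv E"] matrix_mul_assoc matrix_inv_left)
qed

lemma inner_axis_matrix_vector_axis: "axis i 1 \<bullet> (A *v axis j 1) = (A::real^'n^'m) $ i $ j"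
  by (simp add: matrix_vector_mult_basis inner_axis' column_def)

lemma pd_symmetric: "pd X \<Longrightarrow> transpose X = X"
  by (simp add: pd_def symmetric_mat_def)

lemma pd_diag_pos: "pd X \<Longrightarrow> 0 < X $ i $ i"
  unfolding pd_def by (metis axis_eq_0_iff inner_axis_matrix_vector_axis zero_neq_one)

lemma pd_congruence:
  fixes Q E :: "real^'n^'n"
  assumes "pd Q" "invertible E"
  shows "pd (E ** Q ** transpose E)"
  unfolding pd_def symmetric_mat_def
proof safe
  show "transpose (E ** Q ** transpose E) = E ** Q ** transpose E"
    using pd_symmetric[OF assms(1)] by (simp add: matrix_transpose_mul matrix_mul_assoc)
  fix x :: "real^'n" assume "x \<noteq> 0"
  then have "transpose E *v x \<noteq> 0"
    using assms(2) transpose_invertible inj_matrix_vector_mult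
    by (metis injD matrix_vector_mult_0_right)
  then have "0 < (transpose E *v x) \<bullet> (Q *v (transpose E *v x))"
    using assms(1) by (simp add: pd_def)
  also have "\<dots> = x \<bullet> ((E ** Q ** transpose E) *v x)"
    by (simp add: dot_lmul_matrix flip: matrix_vector_mul_assoc)
  finally show "0 < x \<bullet> ((E ** Q ** transpose E) *v x)" .
qed

lemma pd_segment:
  fixes X Y :: "real^'n^'n"
  assumes "pd X" "pd Y" "0 \<le> l" "l \<le> 1"
  shows "pd (X + l *\<^sub>R (Y - X))"
  unfolding pd_def symmetric_mat_def
proof safe
  show "transpose (X + l *\<^sub>R (Y - X)) = X + l *\<^sub>R (Y - X)"
    using assms(1,2)[THEN pd_symmetric] by (simp add: vec_eq_iff transpose_def)
next
  fix x :: "real^'n" assume "x \<noteq> 0"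
  then have "0 < x \<bullet> (X *v x)" "0 < x \<bullet> (Y *v x)" using assms(1,2) unfolding pd_def by auto
  moreover have "x \<bullet> ((X + l *\<^sub>R (Y - X)) *v x) =
      (1 - l) * (x \<bullet> (X *v x)) + l * (x \<bullet> (Y *v x))"
    by (simp add: algebra_simps scaleR_matrix_vector_assoc[symmetric] inner_diff_right)
  ultimately show "0 < x \<bullet> ((X + l *\<^sub>R (Y - X)) *v x)"
    using assms(3,4) by (smt (verit) mult_nonneg_nonneg mult_pos_pos)
qed

definition shear_mat :: "real^'n \<Rightarrow> 'n \<Rightarrow> real^'n^'n" where
  "shear_mat c k = (\<chi> i j. (if i = j then 1 else 0) - (if j = k then c $ i else 0))"

lemma shear_mat_mult_component:
  "(shear_mat c k ** A) $ i $ j = A $ i $ j - c $ i * A $ k $ j"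
  by (simp add: shear_mat_def matrix_matrix_mult_def left_diff_distrib sum_subtractf
      if_distrib[of "\<lambda>x. x * _"] cong: if_cong)

lemma mult_transpose_shear_mat_component:
  "(A ** transpose (shear_mat c k)) $ i $ j = A $ i $ j - A $ i $ k * c $ j"
  by (simp add: shear_mat_def matrix_matrix_mult_def transpose_def right_diff_distrib sum_subtractf
      if_distrib[of "\<lambda>x. _ * x"] cong: if_cong)

lemma invertible_shear_mat:
  assumes "c $ k = 0"
  shows "invertible (shear_mat c k)"
proof -
  have "shear_mat c k ** shear_mat (- c) k = mat 1"
    using assms by (simp add: vec_eq_iff shear_mat_mult_component) (simp add: shear_mat_def mat_def)
  then show ?thesis using invertible_right_inverse by blast
qed

lemma pd_congruent_diagonal_on:
  fixes Q :: "real^'n^'n"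
  assumes "pd Q" "finite S"
  shows "\<exists>E::real^'n^'n. invertible E \<and>
           (\<forall>i\<in>S. \<forall>j. j \<noteq> i \<longrightarrow> (E ** Q ** transpose E) $ i $ j = 0)"
  using assms(2)
proof (induction S rule: finite_induct)
  case empty
  show ?case by (intro exI[of _ "mat 1"]) (auto simp: invertible_def)
next
  case (insert k S)
  then obtain E where E: "invertible E"
    and diag_S: "\<And>i j. i \<in> S \<Longrightarrow> j \<noteq> i \<Longrightarrow> (E ** Q ** transpose E) $ i $ j = 0"
    by blast
  define R where "R = E ** Q ** transpose E"
  have "pd R" unfolding R_def using assms(1) E by (rule pd_congruence)
  then have R_kk: "0 < R $ k $ k" by (rule pd_diag_pos)
  have R_sym: "R $ i $ j = R $ j $ i" for i j
    using pd_symmetric[OF \<open>pd R\<close>] by (metis transpose_def vec_lambda_beta)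
  \<comment> \<open>symmetric Gaussian elimination of row and column k\<close>
  define c where "c = (\<chi> i. if i = k then 0 else R $ i $ k / R $ k $ k)"
  define F where "F = shear_mat c k"
  have FR: "(F ** R ** transpose F) $ i $ j =
      (R $ i $ j - c $ i * R $ k $ j) - (R $ i $ k - c $ i * R $ k $ k) * c $ j" for i j
    unfolding F_def mult_transpose_shear_mat_component shear_mat_mult_component ..
  show ?case
  proof (intro exI conjI ballI allI impI)
    show "invertible (F ** E)"
      unfolding F_def using E by (intro invertible_mult invertible_shear_mat) (simp add: c_def)
    fix i j assume "i \<in> insert k S" "j \<noteq> i"
    have "F ** E ** Q ** transpose (F ** E) = F ** R ** transpose F"
      by (simp add: R_def matrix_transpose_mul matrix_mul_assoc)
    moreover have "(F ** R ** transpose F) $ i $ j = 0"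
    proof (cases "i = k")
      case True
      then show ?thesis using \<open>j \<noteq> i\<close> R_kk R_sym[of j k] by (simp add: FR c_def)
    next
      case False
      then have "i \<in> S" using \<open>i \<in> insert k S\<close> by simp
      then have "R $ i $ j = 0" "R $ i $ k = 0"
        using False \<open>j \<noteq> i\<close> diag_S unfolding R_def by auto
      then show ?thesis by (simp add: FR c_def)
    qed
    ultimately show "(F ** E ** Q ** transpose (F ** E)) $ i $ j = 0" by simp
  qed
qed

lemma pd_congruent_identity:
  fixes P :: "real^'n^'n"
  assumes "pd P"
  obtains E :: "real^'n^'n" where "invertible E" "E ** P ** transpose E = mat 1"
proof -
  obtain E :: "real^'n^'n" where E: "invertible E"
    and diag: "\<And>i j. j \<noteq> i \<Longrightarrow> (E ** P ** transpose E) $ i $ j = 0"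
    using pd_congruent_diagonal_on[OF assms finite_class.finite_UNIV] by blast
  define D where "D = E ** P ** transpose E"
  have D_pos: "0 < D $ i $ i" for i
    unfolding D_def using pd_congruence[OF assms E] by (rule pd_diag_pos)
  define S :: "real^'n^'n" where "S = (\<chi> i j. if i = j then 1 / sqrt (D $ i $ i) else 0)"
  have "(S ** D ** transpose S) $ i $ j = D $ i $ j / (sqrt (D $ i $ i) * sqrt (D $ j $ j))" for i j
    by (simp add: S_def matrix_matrix_mult_def transpose_def
        if_distrib[of "\<lambda>x. x * _"] if_distrib[of "\<lambda>x. _ * x"] cong: if_cong)
  moreover have "D $ i $ j / (sqrt (D $ i $ i) * sqrt (D $ j $ j)) = (if i = j then 1 else 0)" for i j
    using D_pos[of i] diag[of j i] by (auto simp: D_def)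
  ultimately have SDS: "S ** D ** transpose S = mat 1"
    by (simp add: vec_eq_iff mat_def)
  have SE: "S ** E ** P ** transpose (S ** E) = mat 1"
    using SDS by (simp add: D_def matrix_transpose_mul matrix_mul_assoc)
  moreover from SE have "invertible (S ** E)"
    using invertible_right_inverse by (metis matrix_mul_assoc)
  ultimately show ?thesis using that by blast
qed

lemma pd_det_pos:
  fixes X :: "real^'n^'n"
  assumes "pd X"
  shows "0 < det X"
proof -
  obtain E :: "real^'n^'n" where E: "E ** X ** transpose E = mat 1"
    using pd_congruent_identity[OF assms] by blast
  have "det X * (det E)\<^sup>2 = det (E ** X ** transpose E)"
    by (simp add: det_mul power2_eq_square)
  also have "\<dots> = 1" by (simp add: E)
  finally show ?thesis
    by (smt (verit) zero_le_power2 mult_nonpos_nonneg)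
qed

lemma pd_invertible: "pd X \<Longrightarrow> invertible (X :: real^'n^'n)"
  by (simp add: invertible_det_nz pd_det_pos less_imp_neq[symmetric])

lemma has_real_derivative_det_line:
  fixes X D :: "real^'n^'n"
  shows "((\<lambda>l. det (X + l *\<^sub>R D)) has_real_derivative
           (\<Sum>k\<in>UNIV. det (\<chi> i. if i = k then D $ i else X $ i))) (at 0)"
proof -
  let ?P = "{p. p permutes (UNIV::'n set)}"
  have "((\<lambda>l. \<Sum>p\<in>?P. of_int (sign p) * (\<Prod>i\<in>UNIV. X $ i $ p i + l * D $ i $ p i))
      has_real_derivative (\<Sum>p\<in>?P. of_int (sign p) *
        (\<Sum>k\<in>UNIV. D $ k $ p k * (\<Prod>i\<in>UNIV - {k}. X $ i $ p i + 0 * D $ i $ p i)))) (at 0)"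
    by (intro DERIV_sum DERIV_cmult has_field_derivative_prod) (auto intro!: derivative_eq_intros)
  moreover have "det (\<chi> i. if i = k then D $ i else X $ i) =
      (\<Sum>p\<in>?P. of_int (sign p) * (D $ k $ p k * (\<Prod>i\<in>UNIV - {k}. X $ i $ p i)))" for k
  proof -
    have "(\<Prod>i\<in>UNIV - {k}. (if i = k then D $ i else X $ i) $ p i) =
        (\<Prod>i\<in>UNIV - {k}. X $ i $ p i)" for p
      by (intro prod.cong) auto
    then show ?thesis by (simp add: det_def prod.remove[of UNIV k])
  qed
  ultimately show ?thesis
    by (simp add: det_def sum_distrib_left sum.swap[of _ ?P])
qed

lemma det_replace_row_lincomb:
  fixes X :: "'a::comm_ring_1^'n^'n"
  shows "det (\<chi> i. if i = k then (\<Sum>j\<in>UNIV. g j *s X $ j) else X $ i) = g k * det X"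
proof -
  have "det (\<chi> i. if i = k then (\<Sum>j\<in>UNIV. g j *s X $ j) else X $ i) =
      (\<Sum>j\<in>UNIV. g j * det (\<chi> i. if i = k then X $ j else X $ i))"
    by (simp add: det_linear_row_sum det_row_mul)
  also have "\<dots> = (\<Sum>j\<in>UNIV. if j = k then g k * det X else 0)"
  proof (intro sum.cong refl)
    fix j
    show "g j * det (\<chi> i. if i = k then X $ j else X $ i) = (if j = k then g k * det X else 0)"
    proof (cases "j = k")
      case False
      then have "det (\<chi> i. if i = k then X $ j else X $ i) = 0"
        by (intro det_identical_rows[of k j]) (auto simp: row_def vec_eq_iff)
      then show ?thesis using False by simp
    next
      case True
      then have "(\<chi> i. if i = k then X $ j else X $ i) = X" by (simp add: vec_eq_iff)
      then show ?thesis using True by simp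
    qed
  qed
  finally show ?thesis by simp
qed

lemma sum_det_replace_row:
  fixes X D Y :: "real^'n^'n"
  assumes "Y ** X = mat 1"
  shows "(\<Sum>k\<in>UNIV. det (\<chi> i. if i = k then D $ i else X $ i)) = det X * trace (D ** Y)"
proof -
  define G where "G = D ** Y"
  have "D = G ** X" unfolding G_def by (metis assms matrix_mul_assoc matrix_mul_rid)
  then have row: "D $ k = (\<Sum>j\<in>UNIV. G $ k $ j *s X $ j)" for k
    by (simp add: vec_eq_iff matrix_matrix_mult_def sum_component)
  have "det (\<chi> i. if i = k then D $ i else X $ i) = G $ k $ k * det X" for k
  proof -
    have "(\<chi> i. if i = k then D $ i else X $ i) = (\<chi> i. if i = k then D $ k else X $ i)"
      by (simp add: vec_eq_iff)
    then show ?thesis unfolding row[of k] by (simp add: det_replace_row_lincomb)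
  qed
  then show ?thesis by (simp add: trace_def G_def sum_distrib_left mult.commute)
qed

lemma has_real_derivative_ln_det_line:
  fixes X D :: "real^'n^'n"
  assumes "pd X"
  shows "((\<lambda>l. ln (det (X + l *\<^sub>R D))) has_real_derivative trace (D ** matrix_inv X)) (at 0)"
proof -
  have "0 < det X" using assms by (rule pd_det_pos)
  moreover have "(\<Sum>k\<in>UNIV. det (\<chi> i. if i = k then D $ i else X $ i)) = det X * trace (D ** matrix_inv X)"
    using assms pd_invertible matrix_inv_left sum_det_replace_row by blast
  ultimately show ?thesis
    using DERIV_chain2[OF DERIV_ln_divide has_real_derivative_det_line[of X D]] by simp
qed

lemma trace_mult_segment:
  fixes B X Y :: "real^'n^'n"
  shows "trace (B ** (X + l *\<^sub>R (Y - X))) = trace (B ** X) + l * (trace (B ** Y) - trace (B ** X))"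
  by (simp add: trace_def matrix_matrix_mult_def sum.distrib sum_subtractf sum_distrib_left algebra_simps)

lemma barrier_minimizer_first_order:
  fixes C X Y :: "real^'n^'n"
  assumes "0 < s" and min: "barrier_minimizer C M A b s X"
    and feas_Y: "\<forall>i<M. trace (transpose (A i) ** Y) = b i" and "pd Y"
  shows "trace (Y ** matrix_inv X) - real CARD('n) \<le>
         s * (trace (transpose C ** Y) - trace (transpose C ** X))"
proof -
  have feas_X: "\<forall>i<M. trace (transpose (A i) ** X) = b i" and "pd X"
    using min unfolding barrier_minimizer_def by auto
  define T where "T = trace (transpose C ** Y) - trace (transpose C ** X)"
  define h where "h l = barrier_obj C s (X + l *\<^sub>R (Y - X))" for l
  have h_eq: "h = (\<lambda>l. trace (transpose C ** X) + l * T - 1 / s * ln (det (X + l *\<^sub>R (Y - X))))"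
    by (simp add: h_def fun_eq_iff barrier_obj_def trace_mult_segment T_def)
  have "((\<lambda>l. trace (transpose C ** X) + l * T) has_real_derivative T) (at 0)"
    by (auto intro!: derivative_eq_intros)
  from DERIV_diff[OF this DERIV_cmult[OF has_real_derivative_ln_det_line[OF \<open>pd X\<close>], where c="1 / s"]]
  have deriv: "(h has_real_derivative T - 1 / s * trace ((Y - X) ** matrix_inv X)) (at 0)"
    unfolding h_eq .
  have min_at_0: "h 0 \<le> h l" if "0 < l" "l \<le> 1" for l
  proof -
    have "(\<forall>i<M. trace (transpose (A i) ** (X + l *\<^sub>R (Y - X))) = b i) \<and>
        pd (X + l *\<^sub>R (Y - X))"
      using feas_X feas_Y pd_segment[OF \<open>pd X\<close> \<open>pd Y\<close>] that by (simp add: trace_mult_segment)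
    then show ?thesis using min unfolding barrier_minimizer_def h_def by simp
  qed
  have "0 \<le> T - 1 / s * trace ((Y - X) ** matrix_inv X)"
  proof (rule ccontr)
    assume "\<not> ?thesis"
    then obtain d where "0 < d" "\<And>l. 0 < l \<Longrightarrow> l < d \<Longrightarrow> h l < h 0"
      using DERIV_neg_dec_right[OF deriv] by force
    then have "h (min (d / 2) 1) < h 0" by simp
    moreover have "h 0 \<le> h (min (d / 2) 1)" using \<open>0 < d\<close> by (intro min_at_0) auto
    ultimately show False by simp
  qed
  moreover have "trace ((Y - X) ** matrix_inv X) = trace (Y ** matrix_inv X) - trace (X ** matrix_inv X)"
    by (simp add: trace_def matrix_matrix_mult_def left_diff_distrib sum_subtractf)
  moreover have "trace (X ** matrix_inv X) = real CARD('n)"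
    using \<open>pd X\<close> by (simp add: pd_invertible matrix_inv_right trace_I)
  ultimately show ?thesis using \<open>0 < s\<close> by (simp add: T_def field_simps)
qed

lemma pd_inverse_diag_bound:
  fixes H K :: "real^'n^'n"
  assumes "pd H" and HK: "H ** K = mat 1"
  shows "0 < K $ i $ i" and "1 \<le> H $ i $ i * K $ i $ i"
proof -
  define x :: "real^'n" where "x = axis i 1"
  define y where "y = K *v x"
  have Hy: "H *v y = x" unfolding y_def by (simp add: matrix_vector_mul_assoc HK)
  have xx: "x \<bullet> x = 1" unfolding x_def by (simp add: inner_axis_axis)
  have xHx: "x \<bullet> (H *v x) = H $ i $ i" and xy: "x \<bullet> y = K $ i $ i"
    unfolding x_def y_def by (simp_all add: inner_axis_matrix_vector_axis)
  have "y v* H = H *v y"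
    by (metis pd_symmetric[OF \<open>pd H\<close>] transpose_matrix_vector)
  then have yHx: "y \<bullet> (H *v x) = 1"
    using xx by (simp add: dot_lmul_matrix[symmetric] Hy)
  have yHy: "y \<bullet> (H *v y) = K $ i $ i"
    using xy by (simp add: Hy inner_commute)
  have "y \<noteq> 0" using Hy xx by auto
  then show K_pos: "0 < K $ i $ i" using \<open>pd H\<close> yHy unfolding pd_def by auto
  \<comment> \<open>Cauchy-Schwarz for the inner product of H, applied to x and y, in expanded form\<close>
  define \<tau> where "\<tau> = 1 / K $ i $ i"
  have "0 \<le> (x - \<tau> *\<^sub>R y) \<bullet> (H *v (x - \<tau> *\<^sub>R y))"
    using \<open>pd H\<close> unfolding pd_def by (cases "x - \<tau> *\<^sub>R y = 0") (auto intro: less_imp_le)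
  also have "\<dots> = H $ i $ i - 2 * \<tau> + \<tau> * \<tau> * K $ i $ i"
    by (simp add: matrix_vector_mult_diff_distrib matrix_vector_mult_scaleR Hy inner_diff_left inner_diff_right
        xHx xx yHx xy yHy inner_commute[of y x] algebra_simps)
  also have "\<dots> = H $ i $ i - 1 / K $ i $ i" unfolding \<tau>_def using K_pos by (simp add: field_simps)
  finally show "1 \<le> H $ i $ i * K $ i $ i" using K_pos by (simp add: divide_le_eq mult.commute)
qed

lemma card_squared_le_sum_mult_sum:
  fixes m w :: "'a \<Rightarrow> real"
  assumes "finite S" and "\<And>i. i \<in> S \<Longrightarrow> 0 \<le> m i" "\<And>i. i \<in> S \<Longrightarrow> 0 \<le> w i"
    and "\<And>i. i \<in> S \<Longrightarrow> 1 \<le> m i * w i"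
  shows "(real (card S))\<^sup>2 \<le> sum m S * sum w S"
proof -
  have "real (card S) = (\<Sum>i\<in>S. 1)" by simp
  also have "\<dots> \<le> (\<Sum>i\<in>S. sqrt (m i) * sqrt (w i))"
    using assms(4) by (intro sum_mono) (simp add: real_sqrt_mult[symmetric])
  finally have "(real (card S))\<^sup>2 \<le> (\<Sum>i\<in>S. sqrt (m i) * sqrt (w i))\<^sup>2"
    by (rule power_mono) simp
  also have "\<dots> \<le> (\<Sum>i\<in>S. (sqrt (m i))\<^sup>2) * (\<Sum>i\<in>S. (sqrt (w i))\<^sup>2)"
    by (rule Cauchy_Schwarz_ineq_sum)
  also have "\<dots> = sum m S * sum w S"
    using assms(2,3) by simp
  finally show ?thesis .
qed

lemma pd_trace_inverse:
  fixes H :: "real^'n^'n"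
  assumes "pd H"
  shows "0 < trace (matrix_inv H)" and "(real CARD('n))\<^sup>2 \<le> trace H * trace (matrix_inv H)"
proof -
  have HK: "H ** matrix_inv H = mat 1" using assms pd_invertible matrix_inv_right by blast
  show "0 < trace (matrix_inv H)"
    unfolding trace_def using pd_inverse_diag_bound(1)[OF assms HK] by (simp add: sum_pos)
  show "(real CARD('n))\<^sup>2 \<le> trace H * trace (matrix_inv H)"
    unfolding trace_def using pd_inverse_diag_bound[OF assms HK] pd_diag_pos[OF assms]
    by (intro card_squared_le_sum_mult_sum) (auto intro: less_imp_le)
qed

lemma pd_trace_mult_inverse:
  fixes P Q :: "real^'n^'n"
  assumes "pd P" "pd Q"
  shows "0 < trace (P ** matrix_inv Q)"
    and "(real CARD('n))\<^sup>2 \<le> trace (P ** matrix_inv Q) * trace (Q ** matrix_inv P)"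
proof -
  obtain E :: "real^'n^'n" where E: "invertible E" "E ** P ** transpose E = mat 1"
    using pd_congruent_identity[OF assms(1)] by blast
  define H where "H = E ** Q ** transpose E"
  have "pd H" unfolding H_def using assms(2) E(1) by (rule pd_congruence)
  have "trace (P ** matrix_inv Q) = trace (matrix_inv H)"
    using trace_congruence_mult_inv[OF E(1) pd_invertible[OF assms(2)], of P] by (simp add: E(2) H_def)
  moreover have "trace (Q ** matrix_inv P) = trace H"
    using trace_congruence_mult_inv[OF E(1) pd_invertible[OF assms(1)], of Q]
    by (simp add: E(2) H_def matrix_inv_unique)
  ultimately show "0 < trace (P ** matrix_inv Q)"
    and "(real CARD('n))\<^sup>2 \<le> trace (P ** matrix_inv Q) * trace (Q ** matrix_inv P)"
    using pd_trace_inverse[OF \<open>pd H\<close>] by (simp_all add: mult.commute)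
qed

lemma lower_bound_of_square_le_mult:
  fixes N s t \<Delta> :: real
  assumes "0 < s" "s \<le> t" "0 \<le> N" "N\<^sup>2 \<le> (N + s * \<Delta>) * (N - t * \<Delta>)"
  shows "N / t - N / s \<le> \<Delta>"
proof (cases "0 \<le> \<Delta>")
  case True
  have "N / t \<le> N / s" using assms(1-3) by (simp add: divide_left_mono)
  then show ?thesis using True by simp
next
  case False
  have "0 \<le> (- \<Delta>) * (N * (t - s) + s * t * \<Delta>)"
    using assms(4) by (simp add: power2_eq_square algebra_simps)
  then have "0 \<le> N * (t - s) + s * t * \<Delta>"
    using False by (simp add: mult_le_0_iff)
  then show ?thesis using assms(1,2) by (simp add: field_simps)
qed

theorem lemma4p11:
  fixes C :: "real^'n^'n" and A :: "nat \<Rightarrow> real^'n^'n" and b :: "nat \<Rightarrow> real"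
    and M :: nat and t t_prev :: real and X_prev X_t :: "real^'n^'n"
  assumes symC: "symmetric_mat C"
    and symA: "\<forall>i<M. symmetric_mat (A i)"
    and strictly_feasible: "\<exists>X0 \<in> sdp_feasible M A b. pd X0"
    and finite_opt: "bdd_below ((\<lambda>X. trace (transpose C ** X)) ` sdp_feasible M A b)"
    and t_prev_pos: "t_prev > 0"
    and X_prev: "barrier_minimizer C M A b t_prev X_prev"
    and t_ge: "t \<ge> t_prev"
    and X_t: "barrier_minimizer C M A b t X_t"
  shows "trace (transpose C ** X_prev) - real CARD('n) / t_prev + real CARD('n) / t
           \<le> trace (transpose C ** X_t)"
proof -
  define N where "N = real CARD('n)"
  define \<Delta> where "\<Delta> = trace (transpose C ** X_t) - trace (transpose C ** X_prev)"
  define a where "a = trace (X_t ** matrix_inv X_prev)"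
  define c where "c = trace (X_prev ** matrix_inv X_t)"
  have feas_prev: "\<forall>i<M. trace (transpose (A i) ** X_prev) = b i" "pd X_prev"
    and feas_t: "\<forall>i<M. trace (transpose (A i) ** X_t) = b i" "pd X_t"
    using X_prev X_t unfolding barrier_minimizer_def by auto
  have "a \<le> N + t_prev * \<Delta>"
    using barrier_minimizer_first_order[OF t_prev_pos X_prev feas_t] by (simp add: a_def N_def \<Delta>_def)
  moreover have "c \<le> N - t * \<Delta>"
    using barrier_minimizer_first_order[OF _ X_t feas_prev] t_prev_pos t_ge
    by (simp add: c_def N_def \<Delta>_def algebra_simps)
  moreover have "0 < a" "0 < c" "N\<^sup>2 \<le> a * c"
    using pd_trace_mult_inverse feas_prev(2) feas_t(2) by (simp_all add: a_def c_def N_def)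
  ultimately have "N\<^sup>2 \<le> (N + t_prev * \<Delta>) * (N - t * \<Delta>)"
    by (smt (verit) mult_mono)
  then have "N / t - N / t_prev \<le> \<Delta>"
    using t_prev_pos t_ge by (intro lower_bound_of_square_le_mult) (simp_all add: N_def)
  then show ?thesis by (simp add: N_def \<Delta>_def)
qed

end
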